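(* If $p>1-1/e^2$, then for every $n$, $0\le x_0(n)\le 1-\frac{2}{\log b}$.
   Context: Let $p\in(0,1)$ be constant, $q=1-p$, $b=1/q$, $\log$ the natural logarithm, $\gamma=\gamma(n)=2\log_b n-2\log_b\log_b n-2\log_b 2$, $\Delta=\gamma-\lfloor\gamma\rfloor\in[0,1)$. Define $\varphi_n(x)=(1-\Delta+x)\log_b(1-\Delta+x)+(1-\Delta)(\Delta-x)/2$, and let $x_0=x_0(n)$ be the smallest nonnegative $x$ with $\varphi_n(x)\le0$ (well defined since $\varphi_n(\Delta)=0$, and $x_0\in[0,\Delta]$). *)

theory Defs
  imports Complex_Main
begin

definition base :: "real \<Rightarrow> real" where
  "base p = 1 / (1 - p)"

definition gam :: "real \<Rightarrow> nat \<Rightarrow> real" where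
  "gam p n = 2 * log (base p) (real n) - 2 * log (base p) (log (base p) (real n))
             - 2 * log (base p) 2"

definition Delta :: "real \<Rightarrow> nat \<Rightarrow> real" where
  "Delta p n = gam p n - of_int \<lfloor>gam p n\<rfloor>"

definition phi :: "real \<Rightarrow> nat \<Rightarrow> real \<Rightarrow> real" where
  "phi p n x = (1 - Delta p n + x) * log (base p) (1 - Delta p n + x)
               + (1 - Delta p n) * (Delta p n - x) / 2"

definition x0 :: "real \<Rightarrow> nat \<Rightarrow> real" where
  "x0 p n = (LEAST x. 0 \<le> x \<and> phi p n x \<le> 0)"

end

theory Submission
  imports Defs "HOL-Analysis.Analysis"
begin

text \<open>
  The set \<open>{x \<ge> 0. \<phi>\<^sub>n x \<le> 0}\<close> is closed and bounded below, so its least element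
  \<open>x\<^sub>0\<close> exists and lies below every member. Let \<open>c = 1 - 2 / ln b\<close>, which is nonnegative
  since \<open>p > 1 - 1/e\<^sup>2\<close> means \<open>ln b > 2\<close>. If \<open>\<Delta> \<le> c\<close>, the root \<open>\<Delta>\<close> is a member.
  Otherwise \<open>c\<close> is one: with \<open>t = 1 - \<Delta> + c \<in> (0,1)\<close>, the bound \<open>ln t \<le> t - 1\<close> reduces
  \<open>\<phi>\<^sub>n c \<le> 0\<close> to \<open>t \<ge> (1 - \<Delta>) ln b / 2\<close>.
\<close>

lemma real_Least_closed_eq_Inf:
  fixes S :: "real set"
  assumes "closed S" "S \<noteq> {}" "bdd_below S"
  shows "(LEAST x. x \<in> S) = Inf S"
  using assms by (intro Least_equality closed_contains_Inf cInf_lower)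

lemma xlnx_threshold_nonpos:
  fixes L D :: real
  assumes "2 \<le> L" "D < 1" "1 - 2 / L < D"
  shows "(1 - D + (1 - 2 / L)) * ln (1 - D + (1 - 2 / L)) / L
           + (1 - D) * (D - (1 - 2 / L)) / 2 \<le> 0"
proof -
  define s where "s = 1 - D"
  define t where "t = 1 - D + (1 - 2 / L)"
  have "0 \<le> 1 - 2 / L" using assms(1) by (simp add: field_simps)
  then have t_pos: "0 < t" and t_lt_1: "t < 1" using assms(2,3) by (auto simp: t_def)
  have "s * L / 2 \<le> t"
  proof -
    have "t - s * L / 2 = (L / 2 - 1) * (D - (1 - 2 / L))"
      using assms(1) by (simp add: s_def t_def field_simps)
    also have "\<dots> \<ge> 0" using assms(1,3) by simp
    finally show ?thesis by simp
  qed
  then have "s * L / 2 * (1 - t) \<le> t * (1 - t)" using t_lt_1 by (simp add: mult_right_mono)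
  moreover have "t * ln t \<le> t * (t - 1)"
    using t_pos ln_le_minus_one[OF t_pos] by (simp add: mult_left_mono)
  ultimately have "t * ln t \<le> - (s * (1 - t) / 2) * L" by (simp add: algebra_simps)
  then have "t * ln t / L + s * (1 - t) / 2 \<le> 0"
    using assms(1) by (simp add: field_simps)
  moreover have "1 - t = D - (1 - 2 / L)" by (simp add: t_def)
  ultimately show ?thesis by (simp only: s_def t_def)
qed

lemma Delta_eq_frac: "Delta p n = frac (gam p n)"
  by (simp add: Delta_def frac_def)

lemma closed_phi_nonpos:
  assumes "1 < base p"
  shows "closed {x. 0 \<le> x \<and> phi p n x \<le> 0}"
proof -
  have "1 - Delta p n + x \<noteq> 0" if "0 \<le> x" for x
    using that frac_lt_1[of "gam p n"] by (simp add: Delta_eq_frac)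
  then have "continuous_on {0..} (phi p n)"
    unfolding phi_def using assms by (intro continuous_intros) auto
  then have "closed ({0..} \<inter> phi p n -` {..0})"
    by (intro continuous_closed_preimage) auto
  also have "{0..} \<inter> phi p n -` {..0} = {x. 0 \<le> x \<and> phi p n x \<le> 0}" by auto
  finally show ?thesis .
qed

lemma phi_Delta: "phi p n (Delta p n) = 0"
  by (simp add: phi_def)

lemma ln_base_gt_2:
  assumes "p < 1" and "1 - 1 / exp 2 < p"
  shows "2 < ln (base p)"
proof -
  have "exp 2 < base p"
    using assms by (simp add: base_def field_simps)
  then show ?thesis
    by (metis exp_gt_zero less_trans ln_exp ln_less_cancel_iff)
qed

lemma base_gt_1: "0 < p \<Longrightarrow> p < 1 \<Longrightarrow> 1 < base p"
  by (simp add: base_def)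

lemma phi_threshold_nonpos:
  assumes "2 \<le> ln (base p)" and "1 - 2 / ln (base p) < Delta p n"
  shows "phi p n (1 - 2 / ln (base p)) \<le> 0"
  using xlnx_threshold_nonpos[OF assms(1) _ assms(2)] frac_lt_1[of "gam p n"]
  by (simp add: phi_def log_def Delta_eq_frac)

theorem lemma4:
  fixes p :: real and n :: nat
  assumes "0 < p" and "p < 1" and "p > 1 - 1 / exp 2"
  shows "0 \<le> x0 p n \<and> x0 p n \<le> 1 - 2 / ln (base p)"
proof -
  define S where "S = {x. 0 \<le> x \<and> phi p n x \<le> 0}"
  define c where "c = 1 - 2 / ln (base p)"
  have L: "2 < ln (base p)" using ln_base_gt_2 assms(2,3) .
  have closed: "closed S" unfolding S_def by (rule closed_phi_nonpos[OF base_gt_1[OF assms(1,2)]])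
  have "0 \<le> c" using L by (simp add: c_def field_simps)
  then have witness: "min (Delta p n) c \<in> S"
    using phi_Delta phi_threshold_nonpos[of p n] L by (auto simp: S_def c_def min_def Delta_eq_frac)
  have bdd: "bdd_below S" by (auto simp: S_def intro: bdd_belowI[of _ 0])
  have nonempty: "S \<noteq> {}" using witness by auto
  have x0_eq: "x0 p n = Inf S"
    using real_Least_closed_eq_Inf[OF closed nonempty bdd] by (simp add: x0_def S_def)
  have "Inf S \<in> S" using closed_contains_Inf[OF nonempty bdd closed] .
  moreover have "Inf S \<le> min (Delta p n) c" using witness bdd by (rule cInf_lower)
  ultimately show ?thesis by (simp add: x0_eq S_def c_def)
qed

end
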